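(* Let $(E,\rho)$ be a Polish metric space and $\Psi=\{\Psi(t)\}_{t\geq0}$ an $E$-valued time-homogeneous Markov process with transition semigroup $\{P(t)\}_{t\geq 0}$ and initial distribution $\mu$ on $(\Omega,\mathcal{F},\mathbb{P}_\mu)$. Let $V:E\to[0,\infty)$ be continuous and assume: (a) $\{P(t)\}$ has a unique invariant probability measure $\mu_*$, and there are $\gamma>0$ and $C:\{\nu\in\mathcal{M}_1(E):\int V\,d\nu<\infty\}\to[0,\infty)$ with $d_{\mathrm{FM}}(\nu P(t),\mu_* )\leq C(\nu)e^{-\gamma t}$ for all $t\geq0$ and such $\nu$, where $C(\delta_x)=\varkappa(V(x)+1)^{1/2}$ for some $\varkappa>0$; (b) there exist $A,B\geq 0$, $\Gamma>0$ with $P(t)V^2(x)\leq Ae^{-\Gamma t}V^2(x)+B$ for all $x,t$; (c) $\int_E V^2\,d\mu<\infty$. Fix $g\in\operatorname{Lip}_b(E)$, let $\bar g=g-\int g\,d\mu_*$, $\chi(x)=\int_0^\infty P(t)\bar g(x)\,dt$, and $R(t)=t^{-1/2}(\chi(\Psi(0))-\chi(\Psi(t)))$ for $t>0$. Then $R(t)\to 0$ in $\mathcal{L}^1(\mathbb{P}_\mu)$ as $t\to\infty$.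
   Context: $\mathcal{M}_1(E)$: Borel probability measures; $\operatorname{Lip}_b(E)$: bounded Lipschitz functions with $\|f\|_{\mathrm{BL}}=\max\{\|f\|_\infty,\sup_{x\neq y}|f(x)-f(y)|/\rho(x,y)\}$; $d_{\mathrm{FM}}(\mu,\nu)=\sup\{|\int f\,d\mu-\int f\,d\nu|:\|f\|_{\mathrm{BL}}\leq1\}$. $P(t)f(x)=\int f(y)P(t)(x,dy)$, $\nu P(t)=\int P(t)(x,\cdot)\nu(dx)$; $\Psi(0)\sim\mu$ and $\mathbb{P}_\mu(\Psi(s+t)\in A\mid\mathcal{F}(s))=P(t)(\Psi(s),A)$ for the natural filtration. *)

theory Defs
  imports "HOL-Probability.Probability"
begin

definition Pop :: "(real \<Rightarrow> 'a::topological_space \<Rightarrow> 'a measure) \<Rightarrow> real \<Rightarrow> ('a \<Rightarrow> real) \<Rightarrow> 'a \<Rightarrow> real"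
  where "Pop P t f x = (\<integral>y. f y \<partial>(P t x))"

definition act :: "'a measure \<Rightarrow> (real \<Rightarrow> 'a \<Rightarrow> 'a measure) \<Rightarrow> real \<Rightarrow> 'a measure"
  where "act \<nu> P t = bind \<nu> (P t)"

definition M1 :: "'a::topological_space measure set"
  where "M1 = {\<nu>. prob_space \<nu> \<and> sets \<nu> = sets borel}"

definition BL1 :: "('a::metric_space \<Rightarrow> real) \<Rightarrow> bool"
  where "BL1 f \<longleftrightarrow> (\<forall>x. \<bar>f x\<bar> \<le> 1) \<and> (\<forall>x y. \<bar>f x - f y\<bar> \<le> dist x y)"

definition d_FM :: "'a::metric_space measure \<Rightarrow> 'a measure \<Rightarrow> real"
  where "d_FM \<nu> \<mu> = (SUP f\<in>{f. BL1 f}. \<bar>(\<integral>x. f x \<partial>\<nu>) - (\<integral>x. f x \<partial>\<mu>)\<bar>)"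

definition Lip_b :: "('a::metric_space \<Rightarrow> real) \<Rightarrow> bool"
  where "Lip_b f \<longleftrightarrow> bounded (range f) \<and> (\<exists>L. \<forall>x y. \<bar>f x - f y\<bar> \<le> L * dist x y)"

definition nat_filt :: "'b measure \<Rightarrow> (real \<Rightarrow> 'b \<Rightarrow> 'a::topological_space) \<Rightarrow> real \<Rightarrow> 'b measure"
  where "nat_filt M \<Psi> s = sigma (space M)
     (\<Union>u\<in>{0..s}. {\<Psi> u -` A \<inter> space M | A. A \<in> sets borel})"

definition markov_process ::
  "'b measure \<Rightarrow> (real \<Rightarrow> 'b \<Rightarrow> 'a::topological_space) \<Rightarrow> (real \<Rightarrow> 'a \<Rightarrow> 'a measure) \<Rightarrow> 'a measure \<Rightarrow> bool"
  where "markov_process M \<Psi> P \<mu> \<longleftrightarrow>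
     prob_space M \<and>
     (\<forall>t\<ge>0. \<Psi> t \<in> M \<rightarrow>\<^sub>M borel) \<and>
     distr M borel (\<Psi> 0) = \<mu> \<and>
     (\<forall>s\<ge>0. \<forall>t\<ge>0. \<forall>A\<in>sets borel.
        AE \<omega> in M. real_cond_exp M (nat_filt M \<Psi> s) (indicator {\<omega>\<in>space M. \<Psi> (s+t) \<omega> \<in> A}) \<omega>
                   = measure (P t (\<Psi> s \<omega>)) A)"

definition transition_semigroup :: "(real \<Rightarrow> 'a::topological_space \<Rightarrow> 'a measure) \<Rightarrow> bool"
  where "transition_semigroup P \<longleftrightarrow>
     (\<lambda>(t,x). P t x) \<in> (restrict_space borel {0..} \<Otimes>\<^sub>M borel) \<rightarrow>\<^sub>M prob_algebra borel \<and>
     (\<forall>x. P 0 x = return borel x) \<and>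
     (\<forall>s\<ge>0. \<forall>t\<ge>0. \<forall>x. P (s+t) x = bind (P s x) (P t))"

definition invariant :: "(real \<Rightarrow> 'a::topological_space \<Rightarrow> 'a measure) \<Rightarrow> 'a measure \<Rightarrow> bool"
  where "invariant P \<nu> \<longleftrightarrow> \<nu> \<in> M1 \<and> (\<forall>t\<ge>0. act \<nu> P t = \<nu>)"

end

theory Submission
  imports Defs
begin

text \<open>Condition (a) applied to Dirac masses gives
  |P(t) gbar(x)| <= c kappa sqrt(V x + 1) exp(-gamma t), where c bounds the BL-norm of g;
  integrating in t, |chi x| <= (c kappa / gamma) sqrt(V x + 1) <= (c kappa / gamma) (V(x)^2 + 2).
  Since Psi(t) has law mu P(t), condition (b) together with (c) bounds E V(Psi(t))^2 by
  A int V^2 dmu + B uniformly in t. Hence E |chi(Psi(0)) - chi(Psi(t))| stays bounded and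
  R(t) = O(t^(-1/2)) in L^1.\<close>

lemma continuous_on_if_Lipschitz_bound:
  fixes f :: "'a::metric_space \<Rightarrow> real"
  assumes "\<forall>x y. \<bar>f x - f y\<bar> \<le> L * dist x y"
  shows "continuous_on S f"
proof -
  have "lipschitz_on (max L 0) S f"
    unfolding lipschitz_on_def
  proof (intro conjI ballI)
    fix x y
    have "\<bar>f x - f y\<bar> \<le> L * dist x y" using assms by blast
    also have "\<dots> \<le> max L 0 * dist x y" by (intro mult_right_mono) auto
    finally show "dist (f x) (f y) \<le> max L 0 * dist x y" by (simp add: dist_real_def)
  qed simp
  then show ?thesis by (rule lipschitz_on_continuous_on)
qed

lemma Lip_bE:
  fixes g :: "'a::metric_space \<Rightarrow> real"
  assumes "Lip_b g"
  obtains K L where "\<forall>x. \<bar>g x\<bar> \<le> K" and "\<forall>x y. \<bar>g x - g y\<bar> \<le> L * dist x y"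
    and "g \<in> borel_measurable borel"
proof -
  obtain K where "\<forall>x. \<bar>g x\<bar> \<le> K" using assms unfolding Lip_b_def bounded_iff by auto
  moreover obtain L where L: "\<forall>x y. \<bar>g x - g y\<bar> \<le> L * dist x y"
    using assms unfolding Lip_b_def by auto
  moreover have "g \<in> borel_measurable borel"
    by (intro borel_measurable_continuous_onI continuous_on_if_Lipschitz_bound[OF L])
  ultimately show ?thesis using that by blast
qed

lemma BL1_borel_measurable: "BL1 f \<Longrightarrow> f \<in> borel_measurable borel"
  unfolding BL1_def
  by (intro borel_measurable_continuous_onI continuous_on_if_Lipschitz_bound[where L=1]) auto

lemma (in prob_space) abs_integral_le_const:
  fixes f :: "'a \<Rightarrow> real"
  assumes "f \<in> borel_measurable M" and "\<forall>x. \<bar>f x\<bar> \<le> K"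
  shows "integrable M f" and "\<bar>\<integral>x. f x \<partial>M\<bar> \<le> K"
proof -
  show f: "integrable M f"
    using assms by (intro integrable_const_bound[where B=K]) auto
  have "\<bar>\<integral>x. f x \<partial>M\<bar> \<le> (\<integral>x. \<bar>f x\<bar> \<partial>M)" by (rule integral_abs_bound)
  also have "\<dots> \<le> (\<integral>x. K \<partial>M)" using f assms(2) by (intro integral_mono) auto
  finally show "\<bar>\<integral>x. f x \<partial>M\<bar> \<le> K" by (simp add: prob_space)
qed

lemma abs_integral_diff_le_d_FM:
  assumes "\<nu> \<in> M1" and "\<mu> \<in> M1" and "BL1 f"
  shows "\<bar>(\<integral>x. f x \<partial>\<nu>) - (\<integral>x. f x \<partial>\<mu>)\<bar> \<le> d_FM \<nu> \<mu>"
  unfolding d_FM_def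
proof (rule cSUP_upper)
  show "f \<in> {f. BL1 f}" using assms(3) by simp
  show "bdd_above ((\<lambda>f. \<bar>(\<integral>x. f x \<partial>\<nu>) - (\<integral>x. f x \<partial>\<mu>)\<bar>) ` {f. BL1 f})"
  proof (rule bdd_aboveI2[where M=2])
    fix h :: "'a \<Rightarrow> real" assume "h \<in> {f. BL1 f}"
    then have "h \<in> borel_measurable borel" and "\<forall>x. \<bar>h x\<bar> \<le> 1"
      by (auto simp: BL1_def intro: BL1_borel_measurable)
    moreover have "prob_space \<rho>" and "h \<in> borel_measurable \<rho> \<longleftrightarrow> h \<in> borel_measurable borel"
      if "\<rho> \<in> M1" for \<rho> :: "'a measure"
      using that by (auto simp: M1_def cong: measurable_cong_sets)
    ultimately have "\<bar>\<integral>x. h x \<partial>\<nu>\<bar> \<le> 1" and "\<bar>\<integral>x. h x \<partial>\<mu>\<bar> \<le> 1"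
      using assms(1,2) prob_space.abs_integral_le_const(2) by metis+
    then show "\<bar>(\<integral>x. h x \<partial>\<nu>) - (\<integral>x. h x \<partial>\<mu>)\<bar> \<le> 2" by linarith
  qed
qed

lemma abs_integral_diff_le_Lipschitz_d_FM:
  fixes g :: "'a::metric_space \<Rightarrow> real"
  assumes "\<nu> \<in> M1" and "\<mu> \<in> M1"
    and gK: "\<forall>x. \<bar>g x\<bar> \<le> K" and gL: "\<forall>x y. \<bar>g x - g y\<bar> \<le> L * dist x y"
  shows "\<bar>(\<integral>x. g x \<partial>\<nu>) - (\<integral>x. g x \<partial>\<mu>)\<bar> \<le> max 1 (max K L) * d_FM \<nu> \<mu>"
proof -
  define c where "c = max 1 (max K L)"
  have c: "c \<ge> 1" unfolding c_def by simp
  have "BL1 (\<lambda>x. g x / c)" unfolding BL1_def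
  proof (intro conjI allI)
    fix x y
    have "\<bar>g x\<bar> \<le> c" using gK[rule_format, of x] unfolding c_def by linarith
    then show "\<bar>g x / c\<bar> \<le> 1" using c by simp
    have "\<bar>g x - g y\<bar> \<le> L * dist x y" using gL by blast
    also have "\<dots> \<le> c * dist x y" by (intro mult_right_mono) (auto simp: c_def)
    finally have "\<bar>g x - g y\<bar> \<le> c * dist x y" .
    then show "\<bar>g x / c - g y / c\<bar> \<le> dist x y"
      using c by (simp add: diff_divide_distrib[symmetric] divide_le_eq mult.commute)
  qed
  from abs_integral_diff_le_d_FM[OF assms(1,2) this]
  have "\<bar>(\<integral>x. g x \<partial>\<nu>) - (\<integral>x. g x \<partial>\<mu>)\<bar> / c \<le> d_FM \<nu> \<mu>"
    using c by (simp add: diff_divide_distrib[symmetric])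
  then show ?thesis using c by (simp add: c_def divide_le_eq mult.commute)
qed

lemma abs_set_integral_Ici_le_exp:
  fixes h :: "real \<Rightarrow> real"
  assumes l: "l > 0" and h: "\<And>t. t \<ge> 0 \<Longrightarrow> \<bar>h t\<bar> \<le> B * exp (- l * t)"
  shows "\<bar>set_lebesgue_integral lborel {0..} h\<bar> \<le> B / l"
proof (cases "set_integrable lborel {0..} h")
  case False
  have "B \<ge> 0" using h[of 0] by simp
  with False show ?thesis
    using l by (simp add: set_lebesgue_integral_def set_integrable_def not_integrable_integral_eq)
next
  case True
  have "(\<integral>\<^sup>+t. ennreal (exponential_density l t) \<partial>lborel) = 1"
    using nn_integral_erlang_ith_moment[OF l, of 0 0] by simp
  then have exp_int: "integrable lborel (exponential_density l)"
    and exp_one: "(\<integral>t. exponential_density l t \<partial>lborel) = 1"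
    using exponential_density_nonneg[OF l]
    by (auto intro!: integrableI_nonneg simp: integral_eq_nn_integral)
  have "\<bar>\<integral>t. indicator {0..} t *\<^sub>R h t \<partial>lborel\<bar> \<le> (\<integral>t. B / l * exponential_density l t \<partial>lborel)"
  proof (rule integral_abs_bound_integral)
    show "integrable lborel (\<lambda>t. indicator {0..} t *\<^sub>R h t)"
      using True unfolding set_integrable_def .
    show "integrable lborel (\<lambda>t. B / l * exponential_density l t)"
      using exp_int by simp
    show "\<bar>indicator {0..} t *\<^sub>R h t\<bar> \<le> B / l * exponential_density l t" for t
      using h[of t] l by (simp add: exponential_density_def indicator_def mult.commute)
  qed
  then show ?thesis using exp_one by (simp add: set_lebesgue_integral_def)
qed

lemma sqrt_plus_one_le_square_plus_two:
  fixes v :: real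
  assumes "v \<ge> 0"
  shows "sqrt (v + 1) \<le> v\<^sup>2 + 2"
proof -
  have "sqrt (v + 1) \<le> v + 1"
    using assms by (intro real_le_lsqrt) (auto simp: power2_eq_square)
  also have "\<dots> \<le> v\<^sup>2 + 2"
    using assms zero_le_power2[of "v - 1"] by (simp add: power2_eq_square algebra_simps)
  finally show ?thesis .
qed

lemma transition_semigroup_measurable:
  assumes "transition_semigroup P" and "t \<ge> 0"
  shows "P t \<in> borel \<rightarrow>\<^sub>M prob_algebra borel"
proof -
  have "(\<lambda>x. (t, x)) \<in> borel \<rightarrow>\<^sub>M (restrict_space borel {0..} \<Otimes>\<^sub>M borel)"
    using assms(2) by (intro measurable_Pair measurable_const) (auto simp: space_restrict_space)
  moreover have "(\<lambda>(t,x). P t x) \<in> (restrict_space borel {0..} \<Otimes>\<^sub>M borel) \<rightarrow>\<^sub>M prob_algebra borel"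
    using assms(1) unfolding transition_semigroup_def by blast
  ultimately show ?thesis by (auto dest: measurable_compose)
qed

lemma transition_semigroup_subprob:
  assumes "transition_semigroup P" and "t \<ge> 0"
  shows "P t \<in> borel \<rightarrow>\<^sub>M subprob_algebra borel"
  using measurable_prob_algebraD[OF transition_semigroup_measurable[OF assms]] .

lemma transition_semigroup_prob_space:
  assumes "transition_semigroup P" and "t \<ge> 0"
  shows "prob_space (P t x)" and "sets (P t x) = sets borel"
proof -
  have "P t x \<in> space (prob_algebra borel)"
    using measurable_space[OF transition_semigroup_measurable[OF assms]] by simp
  then show "prob_space (P t x)" "sets (P t x) = sets borel"
    by (auto simp: space_prob_algebra)
qed

lemma act_return:
  assumes "transition_semigroup P" and "t \<ge> 0"
  shows "act (return borel x) P t = P t x"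
  unfolding act_def using transition_semigroup_subprob[OF assms] by (simp add: bind_return)

lemma borel_measurable_set_integral_Pop:
  fixes h :: "'a::topological_space \<Rightarrow> real"
  assumes sg: "transition_semigroup P" and h: "h \<in> borel_measurable borel"
  shows "(\<lambda>x. set_lebesgue_integral lborel {0..} (\<lambda>t. Pop P t h x)) \<in> borel_measurable borel"
proof -
  \<comment> \<open>P is jointly measurable only on [0, oo) x E; clamping the time at 0 extends it to all
    of R without changing the integral over [0, oo).\<close>
  have shift: "(\<lambda>z::'a \<times> real. (max 0 (snd z), fst z)) \<in> (borel \<Otimes>\<^sub>M lborel) \<rightarrow>\<^sub>M (restrict_space borel {0..} \<Otimes>\<^sub>M borel)"
    by (rule measurable_Pair, rule measurable_restrict_space2) (auto simp: space_pair_measure)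
  have joint: "(\<lambda>(t, x). P t x) \<in> (restrict_space borel {0..} \<Otimes>\<^sub>M borel) \<rightarrow>\<^sub>M prob_algebra borel"
    using sg unfolding transition_semigroup_def by blast
  have "(\<lambda>(x, t). P (max 0 t) x) \<in> (borel \<Otimes>\<^sub>M lborel) \<rightarrow>\<^sub>M subprob_algebra borel"
    using measurable_prob_algebraD[OF measurable_compose[OF shift joint]] by (simp add: case_prod_beta')
  from measurable_compose[OF this integral_measurable_subprob_algebra[OF h]]
  have "(\<lambda>(x, t). Pop P (max 0 t) h x) \<in> borel_measurable (borel \<Otimes>\<^sub>M lborel)"
    by (simp add: Pop_def case_prod_beta')
  then have "(\<lambda>x. \<integral>t. indicator {0..} t *\<^sub>R Pop P (max 0 t) h x \<partial>lborel) \<in> borel_measurable borel"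
    by (intro lborel.borel_measurable_lebesgue_integral) (simp add: case_prod_beta')
  moreover have "(\<integral>t. indicator {0..} t *\<^sub>R Pop P (max 0 t) h x \<partial>lborel)
      = set_lebesgue_integral lborel {0..} (\<lambda>t. Pop P t h x)" for x
    unfolding set_lebesgue_integral_def
    by (intro Bochner_Integration.integral_cong) (auto simp: indicator_def)
  ultimately show ?thesis by simp
qed

lemma transition_semigroup_M1:
  assumes "transition_semigroup P" and "t \<ge> 0"
  shows "P t x \<in> M1"
  using transition_semigroup_prob_space[OF assms] by (simp add: M1_def)

lemma d_FM_kernel_le:
  fixes V :: "'a::metric_space \<Rightarrow> real"
  assumes sg: "transition_semigroup P" and t: "t \<ge> 0" and V: "V \<in> borel_measurable borel"
    and decay: "\<forall>\<nu>\<in>M1. (\<integral>\<^sup>+x. ennreal (V x) \<partial>\<nu>) < \<infinity> \<longrightarrow>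
      (\<forall>t\<ge>0. d_FM (act \<nu> P t) \<mu>s \<le> C \<nu> * exp (- \<gamma> * t))"
  shows "d_FM (P t x) \<mu>s \<le> C (return borel x) * exp (- \<gamma> * t)"
proof -
  have "return borel x \<in> M1" by (simp add: M1_def prob_space_return)
  moreover have "(\<integral>\<^sup>+y. ennreal (V y) \<partial>return borel x) < \<infinity>"
    using V by (simp add: nn_integral_return)
  ultimately show ?thesis
    using decay t act_return[OF sg t] by metis
qed

lemma abs_corrector_le:
  fixes g :: "'a::metric_space \<Rightarrow> real"
  assumes sg: "transition_semigroup P" and "\<mu>s \<in> M1" and "\<gamma> > 0"
    and gK: "\<forall>x. \<bar>g x\<bar> \<le> K" and gL: "\<forall>x y. \<bar>g x - g y\<bar> \<le> L * dist x y"
    and gm: "g \<in> borel_measurable borel"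
    and V: "V \<in> borel_measurable borel"
    and decay: "\<forall>\<nu>\<in>M1. (\<integral>\<^sup>+x. ennreal (V x) \<partial>\<nu>) < \<infinity> \<longrightarrow>
      (\<forall>t\<ge>0. d_FM (act \<nu> P t) \<mu>s \<le> C \<nu> * exp (- \<gamma> * t))"
  shows "\<bar>set_lebesgue_integral lborel {0..} (\<lambda>t. Pop P t (\<lambda>y. g y - (\<integral>z. g z \<partial>\<mu>s)) x)\<bar>
    \<le> max 1 (max K L) * C (return borel x) / \<gamma>"
proof (rule abs_set_integral_Ici_le_exp[OF \<open>\<gamma> > 0\<close>])
  fix t :: real assume t: "t \<ge> 0"
  interpret prob_space "P t x" using transition_semigroup_prob_space[OF sg t] by simp
  have "integrable (P t x) g"
    using gm gK transition_semigroup_prob_space(2)[OF sg t]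
    by (intro abs_integral_le_const(1)) (auto cong: measurable_cong_sets)
  then have "Pop P t (\<lambda>y. g y - (\<integral>z. g z \<partial>\<mu>s)) x = (\<integral>y. g y \<partial>P t x) - (\<integral>z. g z \<partial>\<mu>s)"
    by (simp add: Pop_def prob_space)
  also have "\<bar>\<dots>\<bar> \<le> max 1 (max K L) * d_FM (P t x) \<mu>s"
    by (rule abs_integral_diff_le_Lipschitz_d_FM[OF transition_semigroup_M1[OF sg t] assms(2) gK gL])
  also have "\<dots> \<le> max 1 (max K L) * (C (return borel x) * exp (- \<gamma> * t))"
    by (intro mult_left_mono d_FM_kernel_le[OF sg t V decay]) simp
  finally show "\<bar>Pop P t (\<lambda>y. g y - (\<integral>z. g z \<partial>\<mu>s)) x\<bar>
      \<le> max 1 (max K L) * C (return borel x) * exp (- \<gamma> * t)"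
    by (simp add: mult.assoc)
qed

lemma subalgebra_nat_filt:
  assumes "\<And>u. u \<in> {0..s} \<Longrightarrow> \<Psi> u \<in> M \<rightarrow>\<^sub>M borel"
  shows "subalgebra M (nat_filt M \<Psi> s)"
proof -
  define G where "G = (\<Union>u\<in>{0..s}. {\<Psi> u -` A \<inter> space M | A. A \<in> sets borel})"
  have G: "G \<subseteq> sets M" unfolding G_def using assms by (auto simp: measurable_def)
  then have "G \<subseteq> Pow (space M)" using sets.sets_into_space by blast
  then show ?thesis
    unfolding subalgebra_def nat_filt_def G_def[symmetric]
    using sets.sigma_sets_subset[OF G] by (auto simp: sets_measure_of space_measure_of)
qed

lemma (in prob_space) sigma_finite_subalgebra_nat_filt:
  assumes "\<And>u. u \<in> {0..s} \<Longrightarrow> \<Psi> u \<in> M \<rightarrow>\<^sub>M borel"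
  shows "sigma_finite_subalgebra M (nat_filt M \<Psi> s)"
proof -
  interpret finite_measure_subalgebra M "nat_filt M \<Psi> s"
    using subalgebra_nat_filt[OF assms] by unfold_locales
  show ?thesis ..
qed

lemma borel_measurable_measure_kernel:
  assumes "transition_semigroup P" and "t \<ge> 0" and "A \<in> sets borel"
  shows "(\<lambda>x. measure (P t x) A) \<in> borel_measurable borel"
  using measurable_compose[OF transition_semigroup_subprob[OF assms(1,2)]
      measurable_emeasure_subprob_algebra[OF assms(3)]]
  by (simp add: measure_def)

lemma markov_process_prob:
  assumes sg: "transition_semigroup P" and mp: "markov_process M \<Psi> P \<mu>"
    and t: "t \<ge> 0" and A: "A \<in> sets borel"
  shows "measure M {\<omega>\<in>space M. \<Psi> t \<omega> \<in> A} = (\<integral>x. measure (P t x) A \<partial>\<mu>)"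
proof -
  have "prob_space M" and \<Psi>0: "\<Psi> 0 \<in> M \<rightarrow>\<^sub>M borel" and \<Psi>t: "\<Psi> t \<in> M \<rightarrow>\<^sub>M borel"
    and law0: "distr M borel (\<Psi> 0) = \<mu>"
    and step: "AE \<omega> in M. real_cond_exp M (nat_filt M \<Psi> 0)
        (indicator {\<omega>\<in>space M. \<Psi> t \<omega> \<in> A}) \<omega> = measure (P t (\<Psi> 0 \<omega>)) A"
    using mp t A unfolding markov_process_def by auto
  interpret prob_space M by fact
  interpret sigma_finite_subalgebra M "nat_filt M \<Psi> 0"
    by (rule sigma_finite_subalgebra_nat_filt) (use \<Psi>0 in simp)
  have set: "{\<omega>\<in>space M. \<Psi> t \<omega> \<in> A} \<in> sets M" using \<Psi>t A by measurable
  note kernel = borel_measurable_measure_kernel[OF sg t A]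
  have "measure M {\<omega>\<in>space M. \<Psi> t \<omega> \<in> A}
      = (\<integral>\<omega>. real_cond_exp M (nat_filt M \<Psi> 0) (indicator {\<omega>\<in>space M. \<Psi> t \<omega> \<in> A}) \<omega> \<partial>M)"
    using real_cond_exp_int(2)[of "indicator {\<omega>\<in>space M. \<Psi> t \<omega> \<in> A}"] set
    by (simp add: emeasure_eq_measure)
  also have "\<dots> = (\<integral>\<omega>. measure (P t (\<Psi> 0 \<omega>)) A \<partial>M)"
    using step measurable_compose[OF \<Psi>0 kernel] by (intro integral_cong_AE) simp_all
  also have "\<dots> = (\<integral>x. measure (P t x) A \<partial>\<mu>)"
    using integral_distr[OF \<Psi>0 kernel] law0 by simp
  finally show ?thesis .
qed

lemma distr_markov_process:
  assumes sg: "transition_semigroup P" and mp: "markov_process M \<Psi> P \<mu>" and t: "t \<ge> 0"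
  shows "distr M borel (\<Psi> t) = act \<mu> P t"
proof -
  have "prob_space M" and \<Psi>0: "\<Psi> 0 \<in> M \<rightarrow>\<^sub>M borel" and \<Psi>t: "\<Psi> t \<in> M \<rightarrow>\<^sub>M borel"
    and law0: "distr M borel (\<Psi> 0) = \<mu>"
    using mp t unfolding markov_process_def by auto
  interpret prob_space M by fact
  interpret \<mu>: prob_space \<mu> using prob_space_distr[OF \<Psi>0] law0 by simp
  have sets_\<mu>: "sets \<mu> = sets borel" using law0 by auto
  then have kernel: "P t \<in> \<mu> \<rightarrow>\<^sub>M subprob_algebra borel"
    using transition_semigroup_subprob[OF sg t] by (simp cong: measurable_cong_sets)
  show ?thesis
    unfolding act_def
  proof (rule measure_eqI)
    show "sets (distr M borel (\<Psi> t)) = sets (bind \<mu> (P t))"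
      using sets_bind[of \<mu> "P t" borel] transition_semigroup_prob_space(2)[OF sg t]
        sets_eq_imp_space_eq[OF sets_\<mu>] by simp
  next
    fix A assume "A \<in> sets (distr M borel (\<Psi> t))"
    then have A: "A \<in> sets borel" by simp
    have "emeasure (distr M borel (\<Psi> t)) A = measure M {\<omega>\<in>space M. \<Psi> t \<omega> \<in> A}"
      using \<Psi>t A by (simp add: emeasure_distr vimage_def Int_def conj_commute emeasure_eq_measure)
    also have "\<dots> = (\<integral>x. measure (P t x) A \<partial>\<mu>)"
      using markov_process_prob[OF sg mp t A] by simp
    also have "\<dots> = (\<integral>\<^sup>+x. measure (P t x) A \<partial>\<mu>)"
      using borel_measurable_measure_kernel[OF sg t A] transition_semigroup_prob_space(1)[OF sg t]
      by (intro nn_integral_eq_integral[symmetric] \<mu>.integrable_const_bound[where B=1])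
         (auto simp: sets_\<mu> prob_space.prob_le_1 cong: measurable_cong_sets)
    also have "\<dots> = (\<integral>\<^sup>+x. emeasure (P t x) A \<partial>\<mu>)"
      using transition_semigroup_prob_space(1)[OF sg t] by (simp add: finite_measure.emeasure_eq_measure prob_space_def)
    also have "\<dots> = emeasure (bind \<mu> (P t)) A"
      using emeasure_bind[OF _ kernel A] sets_eq_imp_space_eq[OF sets_\<mu>] by simp
    finally show "emeasure (distr M borel (\<Psi> t)) A = emeasure (bind \<mu> (P t)) A" .
  qed
qed

lemma nn_integral_markov_process:
  assumes sg: "transition_semigroup P" and mp: "markov_process M \<Psi> P \<mu>" and t: "t \<ge> 0"
    and f: "f \<in> borel_measurable borel"
  shows "(\<integral>\<^sup>+\<omega>. f (\<Psi> t \<omega>) \<partial>M) = (\<integral>\<^sup>+x. \<integral>\<^sup>+y. f y \<partial>P t x \<partial>\<mu>)"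
proof -
  have \<Psi>t: "\<Psi> t \<in> M \<rightarrow>\<^sub>M borel" and "sets \<mu> = sets borel"
    using mp t unfolding markov_process_def by auto
  then have kernel: "P t \<in> \<mu> \<rightarrow>\<^sub>M subprob_algebra borel"
    using transition_semigroup_subprob[OF sg t] by (simp cong: measurable_cong_sets)
  have "(\<integral>\<^sup>+\<omega>. f (\<Psi> t \<omega>) \<partial>M) = (\<integral>\<^sup>+y. f y \<partial>distr M borel (\<Psi> t))"
    using \<Psi>t f by (simp add: nn_integral_distr)
  also have "\<dots> = (\<integral>\<^sup>+y. f y \<partial>bind \<mu> (P t))"
    using distr_markov_process[OF sg mp t] by (simp add: act_def)
  also have "\<dots> = (\<integral>\<^sup>+x. \<integral>\<^sup>+y. f y \<partial>P t x \<partial>\<mu>)"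
    by (rule nn_integral_bind[OF f kernel])
  finally show ?thesis .
qed

lemma markov_process_moment_bound:
  fixes W :: "'a::topological_space \<Rightarrow> real"
  assumes sg: "transition_semigroup P" and mp: "markov_process M \<Psi> P \<mu>" and t: "t \<ge> 0"
    and W: "W \<in> borel_measurable borel" "\<And>x. W x \<ge> 0"
    and drift: "\<And>x. (\<integral>\<^sup>+y. ennreal (W y) \<partial>P t x) \<le> ennreal (a * W x + b)"
    and "a \<ge> 0" "b \<ge> 0"
    and init: "(\<integral>\<^sup>+x. ennreal (W x) \<partial>\<mu>) \<le> ennreal Q" and "Q \<ge> 0"
  shows "integrable M (\<lambda>\<omega>. W (\<Psi> t \<omega>))" and "(\<integral>\<omega>. W (\<Psi> t \<omega>) \<partial>M) \<le> a * Q + b"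
proof -
  have "prob_space M" and \<Psi>0: "\<Psi> 0 \<in> M \<rightarrow>\<^sub>M borel" and \<Psi>t: "\<Psi> t \<in> M \<rightarrow>\<^sub>M borel"
    and law0: "distr M borel (\<Psi> 0) = \<mu>"
    using mp t unfolding markov_process_def by auto
  interpret \<mu>: prob_space \<mu> using prob_space.prob_space_distr[OF _ \<Psi>0] law0 \<open>prob_space M\<close> by simp
  have W\<mu>: "(\<lambda>x. ennreal (W x)) \<in> borel_measurable \<mu>"
    using W(1) law0 by (auto cong: measurable_cong_sets)
  have "(\<integral>\<^sup>+\<omega>. W (\<Psi> t \<omega>) \<partial>M) = (\<integral>\<^sup>+x. \<integral>\<^sup>+y. W y \<partial>P t x \<partial>\<mu>)"
    using W(1) by (intro nn_integral_markov_process[OF sg mp t]) simp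
  also have "\<dots> \<le> (\<integral>\<^sup>+x. ennreal a * W x + ennreal b \<partial>\<mu>)"
    using drift W(2) \<open>a \<ge> 0\<close> \<open>b \<ge> 0\<close> by (intro nn_integral_mono) (simp add: ennreal_plus ennreal_mult)
  also have "\<dots> = ennreal a * (\<integral>\<^sup>+x. W x \<partial>\<mu>) + ennreal b"
    using W\<mu> by (simp add: nn_integral_add nn_integral_cmult \<mu>.emeasure_space_1)
  also have "\<dots> \<le> ennreal (a * Q + b)"
    using init \<open>a \<ge> 0\<close> \<open>b \<ge> 0\<close> \<open>Q \<ge> 0\<close>
    by (simp add: ennreal_plus ennreal_mult add_right_mono mult_left_mono)
  finally have bound: "(\<integral>\<^sup>+\<omega>. W (\<Psi> t \<omega>) \<partial>M) \<le> ennreal (a * Q + b)" .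
  have meas: "(\<lambda>\<omega>. W (\<Psi> t \<omega>)) \<in> borel_measurable M" using \<Psi>t W(1) by measurable
  show "integrable M (\<lambda>\<omega>. W (\<Psi> t \<omega>))"
    using bound W(2) by (intro integrableI_nonneg[OF meas]) (auto simp: top.not_eq_extremum intro: le_less_trans)
  have "(\<integral>\<omega>. W (\<Psi> t \<omega>) \<partial>M) = enn2real (\<integral>\<^sup>+\<omega>. W (\<Psi> t \<omega>) \<partial>M)"
    using W(2) by (simp add: integral_eq_nn_integral[OF meas])
  also have "\<dots> \<le> enn2real (ennreal (a * Q + b))"
    by (rule enn2real_mono[OF bound]) simp
  also have "\<dots> = a * Q + b"
    using \<open>a \<ge> 0\<close> \<open>b \<ge> 0\<close> \<open>Q \<ge> 0\<close> by (intro enn2real_ennreal) simp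
  finally show "(\<integral>\<omega>. W (\<Psi> t \<omega>) \<partial>M) \<le> a * Q + b" .
qed

lemma markov_process_uniform_moment_bound:
  fixes W :: "'a::topological_space \<Rightarrow> real"
  assumes sg: "transition_semigroup P" and mp: "markov_process M \<Psi> P \<mu>"
    and W: "W \<in> borel_measurable borel" "\<And>x. W x \<ge> 0"
    and Lyapunov: "\<forall>x. \<forall>t\<ge>0.
      (\<integral>\<^sup>+y. ennreal (W y) \<partial>(P t x)) \<le> ennreal (A * exp (- \<Gamma> * t) * W x + B)"
    and "A \<ge> 0" "B \<ge> 0" "\<Gamma> \<ge> 0" and init: "(\<integral>\<^sup>+x. ennreal (W x) \<partial>\<mu>) < \<infinity>"
    and s: "s \<ge> 0"
  shows "integrable M (\<lambda>\<omega>. W (\<Psi> s \<omega>))"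
    and "(\<integral>\<omega>. W (\<Psi> s \<omega>) \<partial>M) \<le> A * enn2real (\<integral>\<^sup>+x. ennreal (W x) \<partial>\<mu>) + B"
proof -
  have drift: "(\<integral>\<^sup>+y. ennreal (W y) \<partial>P s x) \<le> ennreal (A * W x + B)" for x
  proof -
    have "(\<integral>\<^sup>+y. ennreal (W y) \<partial>P s x) \<le> ennreal (A * exp (- \<Gamma> * s) * W x + B)"
      using Lyapunov s by blast
    also have "\<dots> \<le> ennreal (A * W x + B)"
      using \<open>A \<ge> 0\<close> \<open>\<Gamma> \<ge> 0\<close> s W(2) by (intro ennreal_leI add_right_mono mult_right_mono mult_left_le) auto
    finally show ?thesis .
  qed
  have "(\<integral>\<^sup>+x. ennreal (W x) \<partial>\<mu>) \<le> ennreal (enn2real (\<integral>\<^sup>+x. ennreal (W x) \<partial>\<mu>))"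
    using init by (simp add: less_top)
  from markov_process_moment_bound[OF sg mp s W drift \<open>A \<ge> 0\<close> \<open>B \<ge> 0\<close> this]
  show "integrable M (\<lambda>\<omega>. W (\<Psi> s \<omega>))"
    and "(\<integral>\<omega>. W (\<Psi> s \<omega>) \<partial>M) \<le> A * enn2real (\<integral>\<^sup>+x. ennreal (W x) \<partial>\<mu>) + B"
    by simp_all
qed

lemma (in prob_space) integral_abs_diff_comp_le:
  fixes h W :: "'c::topological_space \<Rightarrow> real"
  assumes Y: "Y \<in> M \<rightarrow>\<^sub>M borel" and Z: "Z \<in> M \<rightarrow>\<^sub>M borel" and h: "h \<in> borel_measurable borel"
    and hW: "\<And>x. \<bar>h x\<bar> \<le> a * W x + b" and "a \<ge> 0"
    and WY: "integrable M (\<lambda>\<omega>. W (Y \<omega>))" "(\<integral>\<omega>. W (Y \<omega>) \<partial>M) \<le> K"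
    and WZ: "integrable M (\<lambda>\<omega>. W (Z \<omega>))" "(\<integral>\<omega>. W (Z \<omega>) \<partial>M) \<le> K"
  shows "integrable M (\<lambda>\<omega>. h (Y \<omega>) - h (Z \<omega>))"
    and "(\<integral>\<omega>. \<bar>h (Y \<omega>) - h (Z \<omega>)\<bar> \<partial>M) \<le> 2 * (a * K + b)"
proof -
  define H where "H \<omega> = a * W (Y \<omega>) + a * W (Z \<omega>) + 2 * b" for \<omega>
  have H: "integrable M H" unfolding H_def using WY(1) WZ(1) by simp
  have le_H: "\<bar>h (Y \<omega>) - h (Z \<omega>)\<bar> \<le> H \<omega>" for \<omega>
    using hW[of "Y \<omega>"] hW[of "Z \<omega>"] unfolding H_def by linarith
  show int: "integrable M (\<lambda>\<omega>. h (Y \<omega>) - h (Z \<omega>))"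
    using le_H Y Z h
    by (intro Bochner_Integration.integrable_bound[OF H]) (auto intro: order_trans[OF _ abs_ge_self])
  have "(\<integral>\<omega>. \<bar>h (Y \<omega>) - h (Z \<omega>)\<bar> \<partial>M) \<le> (\<integral>\<omega>. H \<omega> \<partial>M)"
    using int H le_H by (intro integral_mono) auto
  also have "\<dots> = a * (\<integral>\<omega>. W (Y \<omega>) \<partial>M) + a * (\<integral>\<omega>. W (Z \<omega>) \<partial>M) + 2 * b"
    unfolding H_def using WY(1) WZ(1) by (simp add: prob_space)
  also have "\<dots> \<le> 2 * (a * K + b)"
    using mult_left_mono[OF WY(2) \<open>a \<ge> 0\<close>] mult_left_mono[OF WZ(2) \<open>a \<ge> 0\<close>]
    by (simp add: ring_distribs)
  finally show "(\<integral>\<omega>. \<bar>h (Y \<omega>) - h (Z \<omega>)\<bar> \<partial>M) \<le> 2 * (a * K + b)" .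
qed

lemma (in prob_space) tendsto_L1_increment_div_sqrt:
  fixes X :: "real \<Rightarrow> 'a \<Rightarrow> 'c::topological_space" and h W :: "'c \<Rightarrow> real"
  assumes X: "\<And>s. s \<ge> 0 \<Longrightarrow> X s \<in> M \<rightarrow>\<^sub>M borel" and h: "h \<in> borel_measurable borel"
    and hW: "\<And>x. \<bar>h x\<bar> \<le> a * W x + b" and "a \<ge> 0"
    and W: "\<And>s. s \<ge> 0 \<Longrightarrow> integrable M (\<lambda>\<omega>. W (X s \<omega>))"
    and K: "\<And>s. s \<ge> 0 \<Longrightarrow> (\<integral>\<omega>. W (X s \<omega>) \<partial>M) \<le> K"
  shows "(\<forall>\<^sub>F t in at_top. integrable M (\<lambda>\<omega>. (h (X 0 \<omega>) - h (X t \<omega>)) / sqrt t)) \<and>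
    ((\<lambda>t. \<integral>\<omega>. \<bar>(h (X 0 \<omega>) - h (X t \<omega>)) / sqrt t\<bar> \<partial>M) \<longlongrightarrow> 0) at_top"
proof -
  have bound: "integrable M (\<lambda>\<omega>. (h (X 0 \<omega>) - h (X t \<omega>)) / sqrt t) \<and>
      (\<integral>\<omega>. \<bar>(h (X 0 \<omega>) - h (X t \<omega>)) / sqrt t\<bar> \<partial>M) \<le> 2 * (a * K + b) / sqrt t"
    if "t > 0" for t
  proof -
    note diff = integral_abs_diff_comp_le[OF X X h hW \<open>a \<ge> 0\<close> W K W K, of 0 t]
    show ?thesis
      using diff that by (simp add: abs_div divide_right_mono)
  qed
  have "((\<lambda>t. \<integral>\<omega>. \<bar>(h (X 0 \<omega>) - h (X t \<omega>)) / sqrt t\<bar> \<partial>M) \<longlongrightarrow> 0) at_top"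
  proof (rule tendsto_sandwich[where f="\<lambda>_. 0" and h="\<lambda>t. 2 * (a * K + b) / sqrt t"])
    show "\<forall>\<^sub>F t in at_top. (\<integral>\<omega>. \<bar>(h (X 0 \<omega>) - h (X t \<omega>)) / sqrt t\<bar> \<partial>M) \<le> 2 * (a * K + b) / sqrt t"
      using eventually_gt_at_top[of 0] by (rule eventually_mono) (use bound in blast)
    show "((\<lambda>t. 2 * (a * K + b) / sqrt t) \<longlongrightarrow> 0) at_top"
      by (intro tendsto_divide_0[OF tendsto_const] filterlim_at_top_imp_at_infinity sqrt_at_top)
  qed simp_all
  moreover have "\<forall>\<^sub>F t in at_top. integrable M (\<lambda>\<omega>. (h (X 0 \<omega>) - h (X t \<omega>)) / sqrt t)"
    using eventually_gt_at_top[of 0] by (rule eventually_mono) (use bound in blast)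
  ultimately show ?thesis by blast
qed

theorem lemma3p6:
  fixes M :: "'b measure"
    and \<Psi> :: "real \<Rightarrow> 'b \<Rightarrow> 'a::polish_space"
    and P :: "real \<Rightarrow> 'a \<Rightarrow> 'a measure"
    and \<mu> \<mu>s :: "'a measure"
    and V g :: "'a \<Rightarrow> real"
  assumes sg: "transition_semigroup P"
    and mp: "markov_process M \<Psi> P \<mu>"
    and V_cont: "continuous_on UNIV V" and V_nn: "\<forall>x. V x \<ge> 0"
    and a_inv: "invariant P \<mu>s"
    and a_uniq: "\<forall>\<nu>. invariant P \<nu> \<longrightarrow> \<nu> = \<mu>s"
    and a_conv: "\<exists>\<gamma>>0. \<exists>C :: 'a measure \<Rightarrow> real. \<exists>\<kappa>>0.
        (\<forall>\<nu>\<in>M1. (\<integral>\<^sup>+x. ennreal (V x) \<partial>\<nu>) < \<infinity> \<longrightarrow> C \<nu> \<ge> 0 \<and>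
            (\<forall>t\<ge>0. d_FM (act \<nu> P t) \<mu>s \<le> C \<nu> * exp (- \<gamma> * t))) \<and>
        (\<forall>x. C (return borel x) = \<kappa> * sqrt (V x + 1))"
    and b: "\<exists>A\<ge>0. \<exists>B\<ge>0. \<exists>\<Gamma>>0. \<forall>x. \<forall>t\<ge>0.
        (\<integral>\<^sup>+y. ennreal ((V y)\<^sup>2) \<partial>(P t x)) \<le> ennreal (A * exp (- \<Gamma> * t) * (V x)\<^sup>2 + B)"
    and c: "(\<integral>\<^sup>+x. ennreal ((V x)\<^sup>2) \<partial>\<mu>) < \<infinity>"
    and g: "Lip_b g"
  shows "let gbar = (\<lambda>x. g x - (\<integral>y. g y \<partial>\<mu>s));
             chi = (\<lambda>x. set_lebesgue_integral lborel {0..} (\<lambda>t. Pop P t gbar x));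
             R = (\<lambda>t \<omega>. (chi (\<Psi> 0 \<omega>) - chi (\<Psi> t \<omega>)) / sqrt t)
         in (\<forall>\<^sub>F t in at_top. integrable M (R t)) \<and>
            ((\<lambda>t. \<integral>\<omega>. \<bar>R t \<omega>\<bar> \<partial>M) \<longlongrightarrow> 0) at_top"
proof -
  obtain \<gamma> C \<kappa> where "\<gamma> > 0" "\<kappa> > 0" and C_return: "\<And>x. C (return borel x) = \<kappa> * sqrt (V x + 1)"
    and decay: "\<forall>\<nu>\<in>M1. (\<integral>\<^sup>+x. ennreal (V x) \<partial>\<nu>) < \<infinity> \<longrightarrow>
      (\<forall>t\<ge>0. d_FM (act \<nu> P t) \<mu>s \<le> C \<nu> * exp (- \<gamma> * t))"
    using a_conv by blast
  obtain A B \<Gamma> where "A \<ge> 0" "B \<ge> 0" "\<Gamma> > 0" and Lyapunov: "\<forall>x. \<forall>t\<ge>0.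
      (\<integral>\<^sup>+y. ennreal ((V y)\<^sup>2) \<partial>(P t x)) \<le> ennreal (A * exp (- \<Gamma> * t) * (V x)\<^sup>2 + B)"
    using b by blast
  obtain K L where gK: "\<forall>x. \<bar>g x\<bar> \<le> K" and gL: "\<forall>x y. \<bar>g x - g y\<bar> \<le> L * dist x y"
    and g_meas: "g \<in> borel_measurable borel"
    using Lip_bE[OF g] by blast
  have V_meas: "V \<in> borel_measurable borel" by (rule borel_measurable_continuous_onI[OF V_cont])
  have "\<mu>s \<in> M1" using a_inv by (simp add: invariant_def)
  define chi where "chi x = set_lebesgue_integral lborel {0..} (\<lambda>t. Pop P t (\<lambda>y. g y - (\<integral>z. g z \<partial>\<mu>s)) x)" for x
  define D where "D = max 1 (max K L) * \<kappa> / \<gamma>"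
  have chi_le: "\<bar>chi x\<bar> \<le> D * (V x)\<^sup>2 + 2 * D" for x
  proof -
    have "\<bar>chi x\<bar> \<le> D * sqrt (V x + 1)"
      using abs_corrector_le[OF sg \<open>\<mu>s \<in> M1\<close> \<open>\<gamma> > 0\<close> gK gL g_meas V_meas decay]
      by (simp add: chi_def D_def C_return ac_simps)
    also have "\<dots> \<le> D * ((V x)\<^sup>2 + 2)"
      using V_nn \<open>\<gamma> > 0\<close> \<open>\<kappa> > 0\<close>
      by (intro mult_left_mono sqrt_plus_one_le_square_plus_two) (simp_all add: D_def)
    finally show ?thesis by (simp add: algebra_simps)
  qed
  have chi_meas: "chi \<in> borel_measurable borel"
    unfolding chi_def using g_meas by (intro borel_measurable_set_integral_Pop[OF sg]) simp
  have V2_meas: "(\<lambda>x. (V x)\<^sup>2) \<in> borel_measurable borel" using V_meas by measurable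
  note moment = markov_process_uniform_moment_bound[where W="\<lambda>x. (V x)\<^sup>2",
      OF sg mp V2_meas _ Lyapunov \<open>A \<ge> 0\<close> \<open>B \<ge> 0\<close> _ c]
  interpret prob_space M using mp by (simp add: markov_process_def)
  have "\<And>s. s \<ge> 0 \<Longrightarrow> \<Psi> s \<in> M \<rightarrow>\<^sub>M borel" using mp by (simp add: markov_process_def)
  from tendsto_L1_increment_div_sqrt[OF this chi_meas chi_le _ moment] \<open>\<Gamma> > 0\<close>
  show ?thesis unfolding Let_def chi_def[abs_def] using \<open>\<gamma> > 0\<close> \<open>\<kappa> > 0\<close> by (simp add: D_def)
qed

end
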